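(* Let $w=w_1\cdots w_n$ be a word of length $n\ge 2$ in which some letter $\mathrm{A}$ appears exactly $k$ times. Then $f(w)\ge 2k+1$. Further, if $w_i=w_{n-i+1}$ for every $i$ with $w_i=\mathrm{A}$, then $f(w)\ge 2k+2$.
   Context: A word of length $n$ is a sequence $w=w_1w_2\cdots w_n$ of letters (symbols). Let $[n]=\{1,\dots,n\}$. An $n$-grid is a function $G:[n]^2\to\Sigma$, where $\Sigma$ is an arbitrary set of letters. The $i$th row of $G$ contains $w$ if $G(i,j)=w_j$ for all $1\le j\le n$, or $G(i,j)=w_{n-j+1}$ for all $1\le j\le n$. The $j$th column contains $w$ if $G(i,j)=w_i$ for all $i$, or $G(i,j)=w_{n-i+1}$ for all $i$. The main diagonal contains $w$ if $G(i,i)=w_i$ for all $i$ or $G(i,i)=w_{n-i+1}$ for all $i$; the anti-diagonal contains $w$ if $G(i,n-i+1)=w_i$ for all $i$ or $G(i,n-i+1)=w_{n-i+1}$ for all $i$. Let $f(w,G)$ be the number of the $2n+2$ lines ($n$ rows, $n$ columns, $2$ diagonals) of $G$ that contain $w$, and $f(w)=\max_G f(w,G)$ over all $n$-grids $G$. *)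

theory Defs
  imports Main
begin

(* Words are lists; letter w_i (1-based) is  w ! (i - 1).
   An n-grid is a function G :: nat => nat => 'a, only its values on [n]^2 matter. *)

definition letter :: "'a list \<Rightarrow> nat \<Rightarrow> 'a" where
  "letter w i = w ! (i - 1)"

datatype line = Row nat | Col nat | Diag | Anti

definition lines :: "nat \<Rightarrow> line set" where
  "lines n = Row ` {1..n} \<union> Col ` {1..n} \<union> {Diag, Anti}"

fun contains :: "'a list \<Rightarrow> (nat \<Rightarrow> nat \<Rightarrow> 'a) \<Rightarrow> line \<Rightarrow> bool" where
  "contains w G (Row i) =
     ((\<forall>j\<in>{1..length w}. G i j = letter w j) \<or>
      (\<forall>j\<in>{1..length w}. G i j = letter w (length w - j + 1)))"
| "contains w G (Col j) =
     ((\<forall>i\<in>{1..length w}. G i j = letter w i) \<or>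
      (\<forall>i\<in>{1..length w}. G i j = letter w (length w - i + 1)))"
| "contains w G Diag =
     ((\<forall>i\<in>{1..length w}. G i i = letter w i) \<or>
      (\<forall>i\<in>{1..length w}. G i i = letter w (length w - i + 1)))"
| "contains w G Anti =
     ((\<forall>i\<in>{1..length w}. G i (length w - i + 1) = letter w i) \<or>
      (\<forall>i\<in>{1..length w}. G i (length w - i + 1) = letter w (length w - i + 1)))"

definition fwG :: "'a list \<Rightarrow> (nat \<Rightarrow> nat \<Rightarrow> 'a) \<Rightarrow> nat" where
  "fwG w G = card {L \<in> lines (length w). contains w G L}"

definition fw :: "'a list \<Rightarrow> nat" where
  "fw w = Max (range (fwG w))"

end

theory Submission
  imports Defs
begin

text \<open>Let \<open>S\<close> be the set of positions of the letter \<open>A\<close> in \<open>w\<close>. In the grid whose \<open>i\<close>-th row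
  is \<open>w\<close> when \<open>w\<^sub>i = A\<close> and the constant \<open>w\<^sub>i\<close> otherwise, every row indexed by \<open>S\<close> reads \<open>w\<close>;
  so does every column \<open>j \<in> S\<close>, because the rows in \<open>S\<close> contribute \<open>w\<^sub>j = A = w\<^sub>i\<close> there; and
  so does the main diagonal, since both kinds of rows put \<open>w\<^sub>i\<close> at \<open>(i, i)\<close>. This gives \<open>2k + 1\<close>
  lines. If moreover \<open>w\<^sub>i = w\<^sub>n\<^sub>+\<^sub>1\<^sub>-\<^sub>i\<close> at the positions of \<open>A\<close>, the anti-diagonal reads \<open>w\<close> too.\<close>

lemma finite_lines: "finite (lines n)"
  by (simp add: lines_def)

lemma fwG_le_fw: "fwG w G \<le> fw w"
proof -
  have "fwG w G' \<le> card (lines (length w))" for G'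
    unfolding fwG_def by (rule card_mono[OF finite_lines]) auto
  then have "finite (range (fwG w))"
    by (auto intro: finite_subset[of _ "{..card (lines (length w))}"])
  then show ?thesis
    unfolding fw_def by simp
qed

lemma card_le_fw:
  assumes "X \<subseteq> lines (length w)" and "\<And>L. L \<in> X \<Longrightarrow> contains w G L"
  shows "card X \<le> fw w"
proof -
  have "card X \<le> fwG w G"
    unfolding fwG_def using assms by (intro card_mono) (auto simp: finite_lines)
  also have "\<dots> \<le> fw w"
    by (rule fwG_le_fw)
  finally show ?thesis .
qed

definition cross_grid :: "'a list \<Rightarrow> 'a \<Rightarrow> nat \<Rightarrow> nat \<Rightarrow> 'a" where
  "cross_grid w A = (\<lambda>i j. if letter w i = A then letter w j else letter w i)"

lemma contains_Row_cross_grid: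
  assumes "letter w i = A"
  shows "contains w (cross_grid w A) (Row i)"
  using assms by (simp add: cross_grid_def)

lemma contains_Col_cross_grid:
  assumes "letter w j = A"
  shows "contains w (cross_grid w A) (Col j)"
  using assms by (simp add: cross_grid_def)

lemma contains_Diag_cross_grid: "contains w (cross_grid w A) Diag"
  by (simp add: cross_grid_def)

lemma contains_Anti_cross_grid:
  assumes "\<forall>i\<in>{1..length w}. letter w i = A \<longrightarrow> letter w i = letter w (length w - i + 1)"
  shows "contains w (cross_grid w A) Anti"
  using assms by (auto simp: cross_grid_def)

lemma card_Row_Col_image:
  assumes "finite S"
  shows "card (Row ` S \<union> Col ` S) = 2 * card S"
proof -
  have "card (Row ` S \<union> Col ` S) = card (Row ` S) + card (Col ` S)"
    using assms by (intro card_Un_disjoint) auto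
  also have "\<dots> = 2 * card S"
    by (simp add: card_image inj_on_def)
  finally show ?thesis .
qed

theorem lemma9:
  fixes w :: "'a list" and A :: 'a and k n :: nat
  assumes "length w = n" and "n \<ge> 2"
    and "card {i \<in> {1..n}. letter w i = A} = k"
  shows "fw w \<ge> 2 * k + 1 \<and>
         ((\<forall>i\<in>{1..n}. letter w i = A \<longrightarrow> letter w i = letter w (n - i + 1))
           \<longrightarrow> fw w \<ge> 2 * k + 2)"
proof -
  define S where "S = {i \<in> {1..n}. letter w i = A}"
  define X where "X = insert Diag (Row ` S \<union> Col ` S)"
  have "finite S" and "card S = k"
    using assms(3) by (simp_all add: S_def)
  then have card_X: "card X = 2 * k + 1"
    using card_Row_Col_image[of S] by (simp add: X_def image_iff)
  have X_lines: "X \<subseteq> lines n"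
    by (auto simp: X_def S_def lines_def)
  have X_contains: "contains w (cross_grid w A) L" if "L \<in> X" for L
    using that unfolding X_def S_def
    by (auto simp del: contains.simps
        intro: contains_Row_cross_grid contains_Col_cross_grid contains_Diag_cross_grid)
  have "2 * k + 1 \<le> fw w"
    using card_le_fw[of X w, OF _ X_contains] X_lines assms(1) card_X by simp
  moreover have "2 * k + 2 \<le> fw w"
    if "\<forall>i\<in>{1..n}. letter w i = A \<longrightarrow> letter w i = letter w (n - i + 1)"
  proof -
    have "card (insert Anti X) = 2 * k + 2"
      using card_X \<open>finite S\<close> by (simp add: X_def image_iff)
    moreover have "card (insert Anti X) \<le> fw w"
    proof (rule card_le_fw)
      show "insert Anti X \<subseteq> lines (length w)"
        using X_lines assms(1) by (simp add: lines_def)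
      show "contains w (cross_grid w A) L" if "L \<in> insert Anti X" for L
        using that X_contains contains_Anti_cross_grid[of w A] \<open>\<forall>i\<in>{1..n}. _\<close> assms(1)
        by blast
    qed
    ultimately show ?thesis
      by simp
  qed
  ultimately show ?thesis
    by blast
qed

end
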